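(* Strongly $D$-continuous pseudo-orthomodular posets are precisely the complement-closed and doubly dense subsets of complete orthomodular lattices. That is: (a) every strongly $D$-continuous pseudo-orthomodular poset is isomorphic (as a poset with complementation) to a complement-closed and doubly dense subset of some complete orthomodular lattice, with the induced order and complementation; and (b) if $X$ is a complement-closed and doubly dense subset of a complete orthomodular lattice, then $X$ with the induced order and complementation is a strongly $D$-continuous pseudo-orthomodular poset.
   Context: For a poset and $M$ a subset, $U(M)$, $L(M)$ denote the sets of upper and lower bounds; $U(a,b)=U(\{a,b\})$ etc. For subsets $B,C$, $B\le C$ means $b\le c$ for all $b\in B$, $c\in C$. A poset with complementation is a bounded poset $(P,\le,{}',0,1)$ with antitone involution $'$ ($x\le y\Rightarrow y'\le x'$, $x''=x$) with $L(x,x')=\{0\}$, $U(x,x')=\{1\}$; it is pseudo-orthomodular if $L(U(L(x,y),y'),y)=L(x,y)$ for all $x,y$; it is strongly $D$-continuous if for all $B,C\subseteq P$ with $B\le C$: $\bigwedge_{\mathbf P}\{g\in P\mid g\in C\text{ or } g'\in B\}=0$ if and only if every lower bound of $C$ in $P$ is below every upper bound of $B$ in $P$. A lattice with complementation is orthomodular if $x\vee y=((x\vee y)\wedge y')\vee y$ for all $x,y$. For a poset with complementation $\mathbf Q=(Q,\le,{}',0,1)$, a subset $X\subseteq Q$ is complement-closed and doubly dense in $\mathbf Q$ if: for every $a\in Q$, $a=\bigvee_{\mathbf Q}(L(a)\cap X)=\bigwedge_{\mathbf Q}(U(a)\cap X)$; $x\in X$ implies $x'\in X$; and $0,1\in X$.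 *)

theory Defs
  imports Main
begin

text \<open>A poset with complementation is represented by a carrier set P, an order
relation le, a complementation c and constants z (bottom 0) and u (top 1).
All notions are relativised to the carrier.\<close>

definition upper :: "'a set \<Rightarrow> ('a \<Rightarrow> 'a \<Rightarrow> bool) \<Rightarrow> 'a set \<Rightarrow> 'a set" where
  "upper P le M = {x \<in> P. \<forall>m\<in>M. le m x}"

definition lower :: "'a set \<Rightarrow> ('a \<Rightarrow> 'a \<Rightarrow> bool) \<Rightarrow> 'a set \<Rightarrow> 'a set" where
  "lower P le M = {x \<in> P. \<forall>m\<in>M. le x m}"

definition is_sup :: "'a set \<Rightarrow> ('a \<Rightarrow> 'a \<Rightarrow> bool) \<Rightarrow> 'a set \<Rightarrow> 'a \<Rightarrow> bool" where
  "is_sup P le M s \<longleftrightarrow> s \<in> upper P le M \<and> (\<forall>x\<in>upper P le M. le s x)"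

definition is_inf :: "'a set \<Rightarrow> ('a \<Rightarrow> 'a \<Rightarrow> bool) \<Rightarrow> 'a set \<Rightarrow> 'a \<Rightarrow> bool" where
  "is_inf P le M s \<longleftrightarrow> s \<in> lower P le M \<and> (\<forall>x\<in>lower P le M. le x s)"

definition poset_on :: "'a set \<Rightarrow> ('a \<Rightarrow> 'a \<Rightarrow> bool) \<Rightarrow> bool" where
  "poset_on P le \<longleftrightarrow>
     (\<forall>x\<in>P. le x x) \<and>
     (\<forall>x\<in>P. \<forall>y\<in>P. le x y \<and> le y x \<longrightarrow> x = y) \<and>
     (\<forall>x\<in>P. \<forall>y\<in>P. \<forall>w\<in>P. le x y \<and> le y w \<longrightarrow> le x w)"

definition poset_with_compl ::
  "'a set \<Rightarrow> ('a \<Rightarrow> 'a \<Rightarrow> bool) \<Rightarrow> ('a \<Rightarrow> 'a) \<Rightarrow> 'a \<Rightarrow> 'a \<Rightarrow> bool" where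
  "poset_with_compl P le c z u \<longleftrightarrow>
     poset_on P le \<and> z \<in> P \<and> u \<in> P \<and> (\<forall>x\<in>P. le z x \<and> le x u) \<and>
     (\<forall>x\<in>P. c x \<in> P) \<and>
     (\<forall>x\<in>P. \<forall>y\<in>P. le x y \<longrightarrow> le (c y) (c x)) \<and>
     (\<forall>x\<in>P. c (c x) = x) \<and>
     (\<forall>x\<in>P. lower P le {x, c x} = {z} \<and> upper P le {x, c x} = {u})"

definition pseudo_orthomodular ::
  "'a set \<Rightarrow> ('a \<Rightarrow> 'a \<Rightarrow> bool) \<Rightarrow> ('a \<Rightarrow> 'a) \<Rightarrow> 'a \<Rightarrow> 'a \<Rightarrow> bool" where
  "pseudo_orthomodular P le c z u \<longleftrightarrow>
     poset_with_compl P le c z u \<and>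
     (\<forall>x\<in>P. \<forall>y\<in>P.
        lower P le (upper P le (lower P le {x, y} \<union> {c y}) \<union> {y}) = lower P le {x, y})"

definition set_le :: "('a \<Rightarrow> 'a \<Rightarrow> bool) \<Rightarrow> 'a set \<Rightarrow> 'a set \<Rightarrow> bool" where
  "set_le le B C \<longleftrightarrow> (\<forall>b\<in>B. \<forall>x\<in>C. le b x)"

definition strongly_D_continuous ::
  "'a set \<Rightarrow> ('a \<Rightarrow> 'a \<Rightarrow> bool) \<Rightarrow> ('a \<Rightarrow> 'a) \<Rightarrow> 'a \<Rightarrow> 'a \<Rightarrow> bool" where
  "strongly_D_continuous P le c z u \<longleftrightarrow>
     poset_with_compl P le c z u \<and>
     (\<forall>B C. B \<subseteq> P \<and> C \<subseteq> P \<and> set_le le B C \<longrightarrow>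
        (is_inf P le {g \<in> P. g \<in> C \<or> c g \<in> B} z \<longleftrightarrow>
         (\<forall>a\<in>lower P le C. \<forall>b\<in>upper P le B. le a b)))"

definition complete_lattice_with_compl ::
  "'a set \<Rightarrow> ('a \<Rightarrow> 'a \<Rightarrow> bool) \<Rightarrow> ('a \<Rightarrow> 'a) \<Rightarrow> 'a \<Rightarrow> 'a \<Rightarrow> bool" where
  "complete_lattice_with_compl Q le c z u \<longleftrightarrow>
     poset_with_compl Q le c z u \<and>
     (\<forall>M. M \<subseteq> Q \<longrightarrow> (\<exists>s. is_sup Q le M s) \<and> (\<exists>i. is_inf Q le M i))"

definition complete_orthomodular_lattice ::
  "'a set \<Rightarrow> ('a \<Rightarrow> 'a \<Rightarrow> bool) \<Rightarrow> ('a \<Rightarrow> 'a) \<Rightarrow> 'a \<Rightarrow> 'a \<Rightarrow> bool" where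
  "complete_orthomodular_lattice Q le c z u \<longleftrightarrow>
     complete_lattice_with_compl Q le c z u \<and>
     (\<forall>x\<in>Q. \<forall>y\<in>Q. \<forall>s m.
        is_sup Q le {x, y} s \<longrightarrow> is_inf Q le {s, c y} m \<longrightarrow> is_sup Q le {m, y} s)"

definition compl_closed_doubly_dense ::
  "'a set \<Rightarrow> ('a \<Rightarrow> 'a \<Rightarrow> bool) \<Rightarrow> ('a \<Rightarrow> 'a) \<Rightarrow> 'a \<Rightarrow> 'a \<Rightarrow> 'a set \<Rightarrow> bool" where
  "compl_closed_doubly_dense Q le c z u X \<longleftrightarrow>
     X \<subseteq> Q \<and>
     (\<forall>a\<in>Q. is_sup Q le (lower Q le {a} \<inter> X) a \<and> is_inf Q le (upper Q le {a} \<inter> X) a) \<and>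
     (\<forall>x\<in>X. c x \<in> X) \<and> z \<in> X \<and> u \<in> X"

definition compl_poset_iso ::
  "('a \<Rightarrow> 'b) \<Rightarrow> 'a set \<Rightarrow> ('a \<Rightarrow> 'a \<Rightarrow> bool) \<Rightarrow> ('a \<Rightarrow> 'a) \<Rightarrow>
   'b set \<Rightarrow> ('b \<Rightarrow> 'b \<Rightarrow> bool) \<Rightarrow> ('b \<Rightarrow> 'b) \<Rightarrow> bool" where
  "compl_poset_iso f P le c X le' c' \<longleftrightarrow>
     bij_betw f P X \<and>
     (\<forall>x\<in>P. \<forall>y\<in>P. le x y \<longleftrightarrow> le' (f x) (f y)) \<and>
     (\<forall>x\<in>P. f (c x) = c' (f x))"

end

theory Submission
  imports Defs
begin

text \<open>
  For (a), embed P into its Dedekind-MacNeille completion: the cuts A = L(U(A)), ordered by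
  inclusion, with complementation A \<mapsto> L(A'), and x \<mapsto> L(x) as embedding. This is a complete
  lattice with complementation in which the principal cuts form a complement-closed, doubly
  dense copy of P. Orthomodularity reduces to: cuts t \<subseteq> s with s \<inter> t' = {0} are equal. This is
  strong D-continuity for B = t and C = U(s), since every lower bound of
  {g | g \<in> U(s) or g' \<in> t} lies in s \<inter> t'.

  For (b), bounds in X are computed in Q, and double density turns statements about bounds in X
  into inequalities in Q. For b = \<Squnion>B \<le> d = \<Sqinter>C, the infimum condition of strong D-continuity
  says d \<sqinter> b' = 0 and the other condition says d \<le> b; these are equivalent by orthomodularity.
  Pseudo-orthomodularity is the dual orthomodular law (m \<squnion> y') \<sqinter> y = m for m = x \<sqinter> y.
\<close>

lemma lower_subset: "lower P le A \<subseteq> P"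
  unfolding lower_def by auto

lemma upper_subset: "upper P le A \<subseteq> P"
  unfolding upper_def by auto

lemma lower_antimono: "A \<subseteq> B \<Longrightarrow> lower P le B \<subseteq> lower P le A"
  unfolding lower_def by auto

lemma upper_antimono: "A \<subseteq> B \<Longrightarrow> upper P le B \<subseteq> upper P le A"
  unfolding upper_def by auto

lemma lower_Un: "lower P le (A \<union> B) = lower P le A \<inter> lower P le B"
  unfolding lower_def by auto

lemma upper_Un: "upper P le (A \<union> B) = upper P le A \<inter> upper P le B"
  unfolding upper_def by auto

lemma lower_pair: "lower P le {a, b} = lower P le {a} \<inter> lower P le {b}"
  unfolding lower_def by auto

lemma upper_pair: "upper P le {a, b} = upper P le {a} \<inter> upper P le {b}"
  unfolding upper_def by auto

lemma subset_lower_upper: "A \<subseteq> P \<Longrightarrow> A \<subseteq> lower P le (upper P le A)"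
  unfolding lower_def upper_def by auto

lemma subset_upper_lower: "A \<subseteq> P \<Longrightarrow> A \<subseteq> upper P le (lower P le A)"
  unfolding lower_def upper_def by auto

lemma lower_upper_lower:
  "A \<subseteq> P \<Longrightarrow> lower P le (upper P le (lower P le A)) = lower P le A"
  by (meson lower_antimono lower_subset subset_antisym subset_lower_upper subset_upper_lower)

lemma is_sup_le_is_inf:
  assumes "C \<subseteq> P" "set_le le B C" "is_sup P le B b" "is_inf P le C d"
  shows "le b d"
  using assms unfolding set_le_def is_sup_def is_inf_def upper_def lower_def by blast

lemma is_sup_unique:
  "poset_on P le \<Longrightarrow> is_sup P le M s \<Longrightarrow> is_sup P le M s' \<Longrightarrow> s = s'"
  unfolding poset_on_def is_sup_def upper_def by blast

lemma is_inf_unique: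
  "poset_on P le \<Longrightarrow> is_inf P le M s \<Longrightarrow> is_inf P le M s' \<Longrightarrow> s = s'"
  unfolding poset_on_def is_inf_def lower_def by blast

lemma is_sup_upper_eq:
  assumes "poset_on P le" "M \<subseteq> P" "is_sup P le M s"
  shows "upper P le M = upper P le {s}"
proof (intro equalityI subsetI)
  fix x assume "x \<in> upper P le M"
  with assms(3) show "x \<in> upper P le {s}" unfolding is_sup_def by (simp add: upper_def)
next
  fix x assume x: "x \<in> upper P le {s}"
  have "s \<in> P" "\<forall>m\<in>M. le m s" using assms(3) unfolding is_sup_def upper_def by auto
  with x assms(1,2) show "x \<in> upper P le M" unfolding poset_on_def upper_def by blast
qed

lemma is_inf_lower_eq:
  assumes "poset_on P le" "M \<subseteq> P" "is_inf P le M i"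
  shows "lower P le M = lower P le {i}"
proof (intro equalityI subsetI)
  fix x assume "x \<in> lower P le M"
  with assms(3) show "x \<in> lower P le {i}" unfolding is_inf_def by (simp add: lower_def)
next
  fix x assume x: "x \<in> lower P le {i}"
  have "i \<in> P" "\<forall>m\<in>M. le i m" using assms(3) unfolding is_inf_def lower_def by auto
  with x assms(1,2) show "x \<in> lower P le M" unfolding poset_on_def lower_def by blast
qed

locale compl_poset =
  fixes P :: "'a set" and le :: "'a \<Rightarrow> 'a \<Rightarrow> bool" and c :: "'a \<Rightarrow> 'a" and z u :: 'a
  assumes with_compl: "poset_with_compl P le c z u"
begin

lemma poset: "poset_on P le"
  using with_compl unfolding poset_with_compl_def by blast

lemma le_refl: "x \<in> P \<Longrightarrow> le x x"
  and le_antisym: "x \<in> P \<Longrightarrow> y \<in> P \<Longrightarrow> le x y \<Longrightarrow> le y x \<Longrightarrow> x = y"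
  and le_trans: "x \<in> P \<Longrightarrow> y \<in> P \<Longrightarrow> w \<in> P \<Longrightarrow> le x y \<Longrightarrow> le y w \<Longrightarrow> le x w"
  using poset unfolding poset_on_def by blast+

lemma z_in: "z \<in> P" and u_in: "u \<in> P"
  and z_le: "x \<in> P \<Longrightarrow> le z x" and le_u: "x \<in> P \<Longrightarrow> le x u"
  and c_in: "x \<in> P \<Longrightarrow> c x \<in> P"
  and c_antitone: "x \<in> P \<Longrightarrow> y \<in> P \<Longrightarrow> le x y \<Longrightarrow> le (c y) (c x)"
  and c_c: "x \<in> P \<Longrightarrow> c (c x) = x"
  and lower_pair_compl: "x \<in> P \<Longrightarrow> lower P le {x, c x} = {z}"
  and upper_pair_compl: "x \<in> P \<Longrightarrow> upper P le {x, c x} = {u}"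
  using with_compl unfolding poset_with_compl_def by blast+

lemma c_le_c_iff: "x \<in> P \<Longrightarrow> y \<in> P \<Longrightarrow> le (c y) (c x) \<longleftrightarrow> le x y"
  by (metis c_antitone c_c c_in)

lemma le_c_swap: "x \<in> P \<Longrightarrow> y \<in> P \<Longrightarrow> le x (c y) \<longleftrightarrow> le y (c x)"
  by (metis c_antitone c_c c_in)

lemma c_image_subset: "A \<subseteq> P \<Longrightarrow> c ` A \<subseteq> P"
  using c_in by blast

lemma is_inf_z_iff: "is_inf P le M z \<longleftrightarrow> lower P le M = {z}"
proof
  assume inf: "is_inf P le M z"
  have "x = z" if x: "x \<in> lower P le M" for x
  proof -
    have xP: "x \<in> P" using x unfolding lower_def by blast
    have "le x z" using x inf unfolding is_inf_def by blast
    then show "x = z" by (rule le_antisym[OF xP z_in _ z_le[OF xP]])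
  qed
  moreover have "z \<in> lower P le M" using inf unfolding is_inf_def by blast
  ultimately show "lower P le M = {z}" by blast
next
  assume "lower P le M = {z}"
  then show "is_inf P le M z" unfolding is_inf_def using le_refl z_in by simp
qed

lemma c_image_lower_c_image: "A \<subseteq> P \<Longrightarrow> c ` lower P le (c ` A) = upper P le A"
proof (intro equalityI subsetI)
  fix y assume A: "A \<subseteq> P" and "y \<in> c ` lower P le (c ` A)"
  then obtain x where "x \<in> lower P le (c ` A)" "y = c x" by blast
  with A show "y \<in> upper P le A"
    unfolding lower_def upper_def by (auto simp: c_in le_c_swap subset_iff)
next
  fix y assume A: "A \<subseteq> P" and y: "y \<in> upper P le A"
  then have "c y \<in> lower P le (c ` A)"
    unfolding lower_def upper_def by (auto simp: c_in c_le_c_iff subset_iff)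
  moreover have "y = c (c y)" using y upper_subset c_c by (metis subsetD)
  ultimately show "y \<in> c ` lower P le (c ` A)" by blast
qed

lemma is_sup_c_image:
  assumes A: "A \<subseteq> P" and s: "is_sup P le A s"
  shows "is_inf P le (c ` A) (c s)"
  unfolding is_inf_def
proof
  have "s \<in> P" "\<forall>a\<in>A. le a s" using s unfolding is_sup_def upper_def by auto
  then show "c s \<in> lower P le (c ` A)"
    using A unfolding lower_def by (auto simp: c_in c_antitone subset_iff)
  show "\<forall>x\<in>lower P le (c ` A). le x (c s)"
  proof
    fix x assume x: "x \<in> lower P le (c ` A)"
    then have xP: "x \<in> P" and "\<forall>a\<in>A. le x (c a)" unfolding lower_def by auto
    then have "c x \<in> upper P le A"
      using A unfolding upper_def by (auto simp: c_in le_c_swap subset_iff)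
    then have "le s (c x)" using s unfolding is_sup_def by blast
    then show "le x (c s)" using s xP le_c_swap unfolding is_sup_def upper_def by auto
  qed
qed

lemma is_sup_pair_of_le: "x \<in> P \<Longrightarrow> y \<in> P \<Longrightarrow> le x y \<Longrightarrow> is_sup P le {x, y} y"
  unfolding is_sup_def upper_def using le_refl by auto

lemma lower_upper_singleton:
  assumes p: "p \<in> P"
  shows "lower P le (upper P le {p}) = lower P le {p}"
proof (rule subset_antisym)
  have "p \<in> upper P le {p}" unfolding upper_def using p le_refl by simp
  then show "lower P le (upper P le {p}) \<subseteq> lower P le {p}" by (intro lower_antimono) simp
  show "lower P le {p} \<subseteq> lower P le (upper P le {p})"
  proof
    fix y assume "y \<in> lower P le {p}"
    then have y: "y \<in> P" "le y p" unfolding lower_def by auto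
    have "le y w" if "w \<in> upper P le {p}" for w
      using that le_trans[OF y(1) p _ y(2)] unfolding upper_def by simp
    with y show "y \<in> lower P le (upper P le {p})" unfolding lower_def by simp
  qed
qed

lemma c_z: "c z = u"
proof -
  have "c z \<in> upper P le {z, c z}"
    unfolding upper_def using z_in c_in z_le le_refl by auto
  then show ?thesis using upper_pair_compl[OF z_in] by blast
qed

lemma lower_singleton_z: "lower P le {z} = {z}"
  unfolding lower_def using z_in z_le le_antisym le_refl by auto

lemma lower_singleton_u: "lower P le {u} = P"
  unfolding lower_def using le_u by auto

end

context compl_poset
begin

definition cuts :: "'a set set" where
  "cuts = {A. A \<subseteq> P \<and> lower P le (upper P le A) = A}"

definition cut_compl :: "'a set \<Rightarrow> 'a set" where
  "cut_compl A = lower P le (c ` A)"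

definition principal :: "'a \<Rightarrow> 'a set" where
  "principal x = lower P le {x}"

lemma cut_subset: "A \<in> cuts \<Longrightarrow> A \<subseteq> P"
  and lower_upper_cut: "A \<in> cuts \<Longrightarrow> lower P le (upper P le A) = A"
  unfolding cuts_def by auto

lemma lower_in_cuts: "M \<subseteq> P \<Longrightarrow> lower P le M \<in> cuts"
  unfolding cuts_def by (simp add: lower_subset lower_upper_lower)

lemma cut_down_closed:
  assumes A: "A \<in> cuts" and "x \<in> A" "y \<in> P" "le y x"
  shows "y \<in> A"
proof -
  have "x \<in> P" using assms cut_subset by blast
  with assms have "y \<in> lower P le (upper P le A)"
    unfolding lower_def upper_def using le_trans by blast
  then show ?thesis using lower_upper_cut[OF A] by simp
qed

lemma z_in_cut: "A \<in> cuts \<Longrightarrow> z \<in> A"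
proof -
  assume A: "A \<in> cuts"
  have "z \<in> lower P le (upper P le A)" by (auto simp: lower_def upper_def z_in z_le)
  then show ?thesis by (simp add: lower_upper_cut[OF A])
qed

lemma cut_compl_in_cuts: "A \<subseteq> P \<Longrightarrow> cut_compl A \<in> cuts"
  unfolding cut_compl_def using lower_in_cuts c_image_subset by blast

lemma cut_compl_cut_compl: "A \<in> cuts \<Longrightarrow> cut_compl (cut_compl A) = A"
  unfolding cut_compl_def
  by (simp add: c_image_lower_c_image cut_subset lower_upper_cut)

lemma cut_compl_antimono: "A \<subseteq> B \<Longrightarrow> cut_compl B \<subseteq> cut_compl A"
  unfolding cut_compl_def by (intro lower_antimono image_mono)

lemma inter_cut_compl: "A \<subseteq> P \<Longrightarrow> A \<inter> cut_compl A \<subseteq> {z}"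
proof
  fix x assume A: "A \<subseteq> P" and x: "x \<in> A \<inter> cut_compl A"
  then have "x \<in> P" "le x (c x)" unfolding cut_compl_def lower_def by auto
  then have "x \<in> lower P le {x, c x}" unfolding lower_def using le_refl by auto
  then show "x \<in> {z}" using lower_pair_compl \<open>x \<in> P\<close> by blast
qed

lemma cut_compl_z: "cut_compl {z} = P"
  unfolding cut_compl_def using c_z lower_singleton_u by simp

lemma poset_cuts: "poset_on cuts (\<subseteq>)"
  unfolding poset_on_def by blast

lemma is_sup_cuts:
  assumes M: "M \<subseteq> cuts"
  shows "is_sup cuts (\<subseteq>) M (lower P le (upper P le (\<Union>M)))"
proof -
  have UM: "\<Union>M \<subseteq> P" using M cut_subset by blast
  have least: "lower P le (upper P le (\<Union>M)) \<subseteq> B" if B: "B \<in> cuts" "\<forall>A\<in>M. A \<subseteq> B" for B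
  proof -
    have "lower P le (upper P le (\<Union>M)) \<subseteq> lower P le (upper P le B)"
      using B(2) by (intro lower_antimono upper_antimono) blast
    then show ?thesis by (simp add: lower_upper_cut[OF B(1)])
  qed
  have "\<forall>A\<in>M. A \<subseteq> lower P le (upper P le (\<Union>M))" using subset_lower_upper[OF UM] by blast
  then have "lower P le (upper P le (\<Union>M)) \<in> upper cuts (\<subseteq>) M"
    unfolding upper_def[of cuts] using lower_in_cuts[OF upper_subset] by simp
  moreover have "\<forall>B\<in>upper cuts (\<subseteq>) M. lower P le (upper P le (\<Union>M)) \<subseteq> B"
    unfolding upper_def[of cuts] using least by simp
  ultimately show ?thesis unfolding is_sup_def by simp
qed

lemma is_inf_cuts:
  assumes M: "M \<subseteq> cuts"
  shows "is_inf cuts (\<subseteq>) M (P \<inter> \<Inter>M)"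
proof -
  have sub: "lower P le (upper P le (P \<inter> \<Inter>M)) \<subseteq> A" if A: "A \<in> M" for A
  proof -
    have "lower P le (upper P le (P \<inter> \<Inter>M)) \<subseteq> lower P le (upper P le A)"
      using A by (intro lower_antimono upper_antimono) blast
    moreover have "A \<in> cuts" using A M by blast
    ultimately show ?thesis by (simp add: lower_upper_cut)
  qed
  have "lower P le (upper P le (P \<inter> \<Inter>M)) \<subseteq> P \<inter> \<Inter>M"
    by (intro Int_greatest lower_subset Inter_greatest sub)
  moreover have "P \<inter> \<Inter>M \<subseteq> lower P le (upper P le (P \<inter> \<Inter>M))"
    by (rule subset_lower_upper) blast
  ultimately have "P \<inter> \<Inter>M \<in> cuts" unfolding cuts_def by blast
  moreover have "\<forall>B\<in>lower cuts (\<subseteq>) M. B \<subseteq> P \<inter> \<Inter>M"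
    unfolding lower_def[of cuts] using cut_subset by blast
  ultimately show ?thesis unfolding is_inf_def lower_def[of cuts] by blast
qed

lemma z_cut: "{z} \<in> cuts"
  using lower_in_cuts[of "{z}"] z_in by (simp add: lower_singleton_z)

lemma P_cut: "P \<in> cuts"
  using lower_in_cuts[of "{u}"] u_in by (simp add: lower_singleton_u)

lemma lower_cuts_pair_cut_compl:
  assumes A: "A \<in> cuts"
  shows "lower cuts (\<subseteq>) {A, cut_compl A} = {{z}}"
proof (intro equalityI subsetI)
  fix B assume "B \<in> lower cuts (\<subseteq>) {A, cut_compl A}"
  then have "B \<in> cuts" "B \<subseteq> A \<inter> cut_compl A" unfolding lower_def by auto
  then show "B \<in> {{z}}" using inter_cut_compl[OF cut_subset[OF A]] z_in_cut by blast
next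
  fix B assume "B \<in> {{z}}"
  moreover have "z \<in> A" "z \<in> cut_compl A"
    using A z_in_cut cut_compl_in_cuts cut_subset by blast+
  ultimately show "B \<in> lower cuts (\<subseteq>) {A, cut_compl A}"
    unfolding lower_def using z_cut by simp
qed

lemma upper_cuts_pair_cut_compl:
  assumes A: "A \<in> cuts"
  shows "upper cuts (\<subseteq>) {A, cut_compl A} = {P}"
proof -
  have "B = P" if B: "B \<in> cuts" "A \<subseteq> B" "cut_compl A \<subseteq> B" for B
  proof -
    have "cut_compl B \<subseteq> A \<inter> cut_compl A"
      using cut_compl_antimono[OF B(2)] cut_compl_antimono[OF B(3)]
      by (simp add: cut_compl_cut_compl[OF A])
    then have "cut_compl B = {z}"
      using inter_cut_compl[OF cut_subset[OF A]] z_in_cut[OF cut_compl_in_cuts[OF cut_subset[OF B(1)]]]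
      by blast
    then show "B = P" using cut_compl_cut_compl[OF B(1)] cut_compl_z by simp
  qed
  moreover have "A \<subseteq> P" "cut_compl A \<subseteq> P"
    using A cut_subset cut_compl_in_cuts by blast+
  ultimately show ?thesis unfolding upper_def using P_cut by auto
qed

lemma complete_lattice_with_compl_cuts:
  "complete_lattice_with_compl cuts (\<subseteq>) cut_compl {z} P"
proof -
  have "poset_with_compl cuts (\<subseteq>) cut_compl {z} P"
    unfolding poset_with_compl_def
    by (intro conjI ballI impI)
      (simp_all add: poset_cuts z_cut P_cut z_in_cut cut_subset cut_compl_in_cuts
        cut_compl_antimono cut_compl_cut_compl lower_cuts_pair_cut_compl upper_cuts_pair_cut_compl)
  then show ?thesis
    unfolding complete_lattice_with_compl_def using is_sup_cuts is_inf_cuts by blast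
qed

lemma mem_principal: "y \<in> principal x \<longleftrightarrow> y \<in> P \<and> le y x"
  unfolding principal_def lower_def by simp

lemma principal_in_cuts: "x \<in> P \<Longrightarrow> principal x \<in> cuts"
  unfolding principal_def by (simp add: lower_in_cuts)

lemma principal_subset_principal_iff:
  assumes "x \<in> P" "y \<in> P"
  shows "principal x \<subseteq> principal y \<longleftrightarrow> le x y"
  using assms le_refl le_trans unfolding mem_principal subset_iff by blast

lemma principal_c: "x \<in> P \<Longrightarrow> principal (c x) = cut_compl (principal x)"
  using c_image_lower_c_image[of "{c x}"]
  by (simp add: principal_def cut_compl_def c_c c_in lower_upper_singleton)

lemma principal_subset_cut_iff:
  assumes "A \<in> cuts" "x \<in> P"
  shows "principal x \<subseteq> A \<longleftrightarrow> x \<in> A"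
  using assms cut_down_closed le_refl unfolding mem_principal subset_iff by blast

lemma subset_principal_iff:
  assumes "A \<subseteq> P" "x \<in> P"
  shows "A \<subseteq> principal x \<longleftrightarrow> x \<in> upper P le A"
  using assms by (auto simp: mem_principal upper_def)

lemma lower_cut_principals:
  assumes A: "A \<in> cuts"
  shows "lower cuts (\<subseteq>) {A} \<inter> principal ` P = principal ` A"
proof (intro equalityI subsetI)
  fix X assume "X \<in> lower cuts (\<subseteq>) {A} \<inter> principal ` P"
  then obtain x where "x \<in> P" "X = principal x" "principal x \<subseteq> A" unfolding lower_def by auto
  then show "X \<in> principal ` A" using principal_subset_cut_iff[OF A] by auto
next
  fix X assume "X \<in> principal ` A"
  then obtain x where x: "x \<in> A" "X = principal x" by blast
  then have "x \<in> P" using cut_subset[OF A] by blast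
  with x show "X \<in> lower cuts (\<subseteq>) {A} \<inter> principal ` P"
    using principal_subset_cut_iff[OF A] principal_in_cuts unfolding lower_def by auto
qed

lemma upper_cut_principals:
  assumes A: "A \<in> cuts"
  shows "upper cuts (\<subseteq>) {A} \<inter> principal ` P = principal ` upper P le A"
proof (intro equalityI subsetI)
  fix X assume "X \<in> upper cuts (\<subseteq>) {A} \<inter> principal ` P"
  then obtain x where "x \<in> P" "X = principal x" "A \<subseteq> principal x" unfolding upper_def by auto
  then show "X \<in> principal ` upper P le A" using subset_principal_iff[OF cut_subset[OF A]] by auto
next
  fix X assume "X \<in> principal ` upper P le A"
  then obtain x where x: "x \<in> upper P le A" "X = principal x" by blast
  have xP: "x \<in> P" using subsetD[OF upper_subset x(1)] .
  then have "A \<subseteq> principal x" using subset_principal_iff[OF cut_subset[OF A]] x(1) by blast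
  then have "X \<in> upper cuts (\<subseteq>) {A}"
    unfolding upper_def[of cuts] using principal_in_cuts[OF xP] x(2) by simp
  then show "X \<in> upper cuts (\<subseteq>) {A} \<inter> principal ` P" using xP x(2) by blast
qed

lemma Union_principal_cut:
  assumes A: "A \<in> cuts"
  shows "\<Union>(principal ` A) = A"
proof (intro equalityI subsetI)
  fix y assume "y \<in> \<Union>(principal ` A)"
  then obtain x where "x \<in> A" "y \<in> principal x" by blast
  then show "y \<in> A" using principal_subset_cut_iff[OF A] cut_subset[OF A] by blast
next
  fix y assume y: "y \<in> A"
  then have "y \<in> principal y" using mem_principal le_refl cut_subset[OF A] by blast
  with y show "y \<in> \<Union>(principal ` A)" by blast
qed

lemma Inter_principal_upper: "P \<inter> \<Inter>(principal ` upper P le A) = lower P le (upper P le A)"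
  by (auto simp: mem_principal lower_def)

lemma compl_closed_doubly_dense_principal:
  "compl_closed_doubly_dense cuts (\<subseteq>) cut_compl {z} P (principal ` P)"
  unfolding compl_closed_doubly_dense_def
proof (intro conjI ballI)
  show "principal ` P \<subseteq> cuts" using principal_in_cuts by blast
  show "cut_compl X \<in> principal ` P" if "X \<in> principal ` P" for X
    using that principal_c c_in by auto
  show "{z} \<in> principal ` P"
    using z_in lower_singleton_z unfolding principal_def by (metis image_eqI)
  show "P \<in> principal ` P"
    using u_in lower_singleton_u unfolding principal_def by (metis image_eqI)
next
  fix A assume A: "A \<in> cuts"
  have "principal ` A \<subseteq> cuts" using principal_in_cuts cut_subset[OF A] by blast
  from is_sup_cuts[OF this]
  show "is_sup cuts (\<subseteq>) (lower cuts (\<subseteq>) {A} \<inter> principal ` P) A"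
    by (simp add: lower_cut_principals[OF A] Union_principal_cut[OF A] lower_upper_cut[OF A])
  have "principal ` upper P le A \<subseteq> cuts" using principal_in_cuts upper_subset[of P le A] by blast
  from is_inf_cuts[OF this]
  show "is_inf cuts (\<subseteq>) (upper cuts (\<subseteq>) {A} \<inter> principal ` P) A"
    by (simp add: upper_cut_principals[OF A] Inter_principal_upper lower_upper_cut[OF A])
qed

lemma compl_poset_iso_principal:
  "compl_poset_iso principal P le c (principal ` P) (\<subseteq>) cut_compl"
proof -
  have "inj_on principal P"
    by (rule inj_onI) (metis principal_subset_principal_iff le_antisym order_refl)
  then show ?thesis
    unfolding compl_poset_iso_def bij_betw_def
    using principal_subset_principal_iff principal_c by blast
qed

end

locale strongly_D_continuous_poset = compl_poset +
  assumes D_continuous: "strongly_D_continuous P le c z u"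
begin

lemma D_continuity:
  assumes "B \<subseteq> P" "C \<subseteq> P" "set_le le B C" "is_inf P le {g \<in> P. g \<in> C \<or> c g \<in> B} z"
  shows "\<forall>a\<in>lower P le C. \<forall>b\<in>upper P le B. le a b"
  using D_continuous assms unfolding strongly_D_continuous_def by blast

lemma cut_eq_if_inter_cut_compl_trivial:
  assumes s: "s \<in> cuts" and t: "t \<in> cuts" and ts: "t \<subseteq> s"
    and trivial: "s \<inter> cut_compl t \<subseteq> {z}"
  shows "s = t"
proof -
  define G where "G = {g \<in> P. g \<in> upper P le s \<or> c g \<in> t}"
  have tP: "t \<subseteq> P" using cut_subset[OF t] .
  have "upper P le s \<union> c ` t \<subseteq> G"
    unfolding G_def using tP c_in c_c upper_subset[of P le s] by auto
  then have "lower P le G \<subseteq> lower P le (upper P le s) \<inter> lower P le (c ` t)"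
    by (metis lower_antimono lower_Un)
  then have "lower P le G \<subseteq> s \<inter> cut_compl t"
    by (simp add: lower_upper_cut[OF s] cut_compl_def)
  with trivial have "lower P le G \<subseteq> {z}" by blast
  moreover have "z \<in> lower P le G"
    unfolding lower_def G_def using z_in z_le by auto
  ultimately have "is_inf P le G z"
    using is_inf_z_iff by blast
  moreover have "set_le le t (upper P le s)"
    using ts unfolding set_le_def upper_def by blast
  ultimately have le_all: "\<forall>a\<in>lower P le (upper P le s). \<forall>b\<in>upper P le t. le a b"
    using D_continuity[OF tP upper_subset] unfolding G_def by blast
  have "s \<subseteq> lower P le (upper P le t)"
  proof
    fix a assume a: "a \<in> s"
    then have "a \<in> lower P le (upper P le s)" by (simp add: lower_upper_cut[OF s])
    with le_all a cut_subset[OF s] show "a \<in> lower P le (upper P le t)"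
      unfolding lower_def[of P le "upper P le t"] by blast
  qed
  with ts show "s = t" by (simp add: lower_upper_cut[OF t])
qed

lemma complete_orthomodular_lattice_cuts:
  "complete_orthomodular_lattice cuts (\<subseteq>) cut_compl {z} P"
  unfolding complete_orthomodular_lattice_def
proof (intro conjI complete_lattice_with_compl_cuts ballI allI impI)
  fix x y s m
  assume y: "y \<in> cuts" and s: "is_sup cuts (\<subseteq>) {x, y} s"
    and m: "is_inf cuts (\<subseteq>) {s, cut_compl y} m"
  have sQ: "s \<in> cuts" and ys: "y \<subseteq> s" using s unfolding is_sup_def upper_def by auto
  have "cut_compl y \<in> cuts" using cut_compl_in_cuts cut_subset[OF y] by blast
  moreover have "P \<inter> (s \<inter> cut_compl y) = s \<inter> cut_compl y" using cut_subset[OF sQ] by blast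
  ultimately have "is_inf cuts (\<subseteq>) {s, cut_compl y} (s \<inter> cut_compl y)"
    using is_inf_cuts[of "{s, cut_compl y}"] sQ by simp
  then have m_eq: "m = s \<inter> cut_compl y" using is_inf_unique[OF poset_cuts m] by blast
  have mQ: "m \<in> cuts" using m unfolding is_inf_def lower_def by simp
  define t where "t = lower P le (upper P le (m \<union> y))"
  have t: "is_sup cuts (\<subseteq>) {m, y} t"
    unfolding t_def using is_sup_cuts[of "{m, y}"] mQ y by simp
  then have tQ: "t \<in> cuts" and mt: "m \<subseteq> t" and yt: "y \<subseteq> t"
    unfolding is_sup_def upper_def by auto
  have "t \<subseteq> s" using t sQ ys m_eq unfolding is_sup_def upper_def by auto
  moreover have "s \<inter> cut_compl t \<subseteq> {z}"
  proof -
    have "s \<inter> cut_compl t \<subseteq> m" using cut_compl_antimono[OF yt] m_eq by blast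
    then have "s \<inter> cut_compl t \<subseteq> t \<inter> cut_compl t" using mt by blast
    then show ?thesis using inter_cut_compl[OF cut_subset[OF tQ]] by blast
  qed
  ultimately have "s = t" using cut_eq_if_inter_cut_compl_trivial sQ tQ by blast
  with t show "is_sup cuts (\<subseteq>) {m, y} s" by simp
qed

end

locale complete_oml =
  fixes Q :: "'a set" and le :: "'a \<Rightarrow> 'a \<Rightarrow> bool" and c :: "'a \<Rightarrow> 'a" and z u :: 'a
  assumes oml: "complete_orthomodular_lattice Q le c z u"

sublocale complete_oml \<subseteq> compl_poset Q le c z u
  using oml unfolding complete_orthomodular_lattice_def complete_lattice_with_compl_def
  by unfold_locales blast

context complete_oml
begin

lemma ex_sup: "M \<subseteq> Q \<Longrightarrow> \<exists>s. is_sup Q le M s"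
  and ex_inf: "M \<subseteq> Q \<Longrightarrow> \<exists>i. is_inf Q le M i"
  using oml unfolding complete_orthomodular_lattice_def complete_lattice_with_compl_def by blast+

lemma orthomodular_law:
  "x \<in> Q \<Longrightarrow> y \<in> Q \<Longrightarrow> is_sup Q le {x, y} s \<Longrightarrow> is_inf Q le {s, c y} m \<Longrightarrow> is_sup Q le {m, y} s"
  using oml unfolding complete_orthomodular_lattice_def by blast

lemma meet_compl_eq_z_iff:
  assumes b: "b \<in> Q" and d: "d \<in> Q" and "le b d" and i: "is_inf Q le {d, c b} i"
  shows "i = z \<longleftrightarrow> d = b"
proof
  assume "i = z"
  have "is_sup Q le {d, b} d"
    using is_sup_pair_of_le[OF b d \<open>le b d\<close>] by (simp add: insert_commute)
  with i \<open>i = z\<close> have "is_sup Q le {z, b} d" using orthomodular_law b d by blast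
  moreover have "is_sup Q le {z, b} b" using is_sup_pair_of_le[OF z_in b z_le[OF b]] .
  ultimately show "d = b" using is_sup_unique[OF poset] by blast
next
  assume "d = b"
  then have "is_inf Q le {d, c b} z" using is_inf_z_iff lower_pair_compl[OF b] by simp
  then show "i = z" using is_inf_unique[OF poset i] by blast
qed

lemma orthomodular_dual:
  assumes m: "m \<in> Q" and y: "y \<in> Q" and "le m y" and s: "is_sup Q le {m, c y} s"
  shows "is_inf Q le {s, y} m"
proof -
  obtain m' where m': "is_inf Q le {c m, y} m'" using ex_inf[of "{c m, y}"] m y c_in by blast
  have "is_sup Q le {c m, c y} (c m)"
    using is_sup_pair_of_le[OF c_in[OF y] c_in[OF m]] c_antitone[OF m y \<open>le m y\<close>]
    by (simp add: insert_commute)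
  moreover have "is_inf Q le {c m, c (c y)} m'" using m' c_c[OF y] by simp
  ultimately have "is_sup Q le {m', c y} (c m)"
    using orthomodular_law c_in m y by blast
  moreover have m'Q: "m' \<in> Q" using m' unfolding is_inf_def lower_def by simp
  ultimately have "is_inf Q le (c ` {m', c y}) (c (c m))"
    using is_sup_c_image[of "{m', c y}"] c_in[OF y] by simp
  then have "is_inf Q le {c m', y} m" by (simp add: c_c m y)
  moreover have "is_inf Q le (c ` {m, c y}) (c s)"
    using is_sup_c_image[OF _ s] m c_in[OF y] by simp
  then have "is_inf Q le {c m, y} (c s)" by (simp add: c_c y)
  then have "c s = m'" using is_inf_unique[OF poset _ m'] by blast
  then have "s = c m'" using s c_c unfolding is_sup_def upper_def by auto
  ultimately show ?thesis by simp
qed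

end

locale doubly_dense_subset = complete_oml +
  fixes X :: "'a set"
  assumes doubly_dense: "compl_closed_doubly_dense Q le c z u X"
begin

lemma X_subset: "X \<subseteq> Q"
  and c_in_X: "x \<in> X \<Longrightarrow> c x \<in> X"
  and z_in_X: "z \<in> X"
  and u_in_X: "u \<in> X"
  and is_sup_lower_dense: "a \<in> Q \<Longrightarrow> is_sup Q le (lower Q le {a} \<inter> X) a"
  and is_inf_upper_dense: "a \<in> Q \<Longrightarrow> is_inf Q le (upper Q le {a} \<inter> X) a"
  using doubly_dense unfolding compl_closed_doubly_dense_def by blast+

lemma lower_X: "lower X le M = lower Q le M \<inter> X"
  using X_subset unfolding lower_def by auto

lemma upper_X: "upper X le M = upper Q le M \<inter> X"
  using X_subset unfolding upper_def by auto

lemma upper_lower_dense: "a \<in> Q \<Longrightarrow> upper Q le (lower Q le {a} \<inter> X) = upper Q le {a}"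
  by (rule is_sup_upper_eq[OF poset _ is_sup_lower_dense]) (use X_subset in auto)

lemma lower_upper_dense: "a \<in> Q \<Longrightarrow> lower Q le (upper Q le {a} \<inter> X) = lower Q le {a}"
  by (rule is_inf_lower_eq[OF poset _ is_inf_upper_dense]) (use X_subset in auto)

lemma lower_dense_eq_z_iff:
  assumes a: "a \<in> Q"
  shows "lower Q le {a} \<inter> X = {z} \<longleftrightarrow> a = z"
proof
  assume "lower Q le {a} \<inter> X = {z}"
  then have "upper Q le {a} = upper Q le {z}" using upper_lower_dense[OF a] by simp
  moreover have "z \<in> upper Q le {z}" unfolding upper_def using z_in le_refl by simp
  ultimately have "le a z" unfolding upper_def by auto
  then show "a = z" using le_antisym[OF a z_in] z_le[OF a] by blast
next
  assume "a = z"
  then show "lower Q le {a} \<inter> X = {z}" using lower_singleton_z z_in_X by simp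
qed

lemma dense_le_iff:
  assumes a: "a \<in> Q" and b: "b \<in> Q"
  shows "(\<forall>x\<in>lower Q le {a} \<inter> X. \<forall>y\<in>upper Q le {b} \<inter> X. le x y) \<longleftrightarrow> le a b"
proof
  assume H: "\<forall>x\<in>lower Q le {a} \<inter> X. \<forall>y\<in>upper Q le {b} \<inter> X. le x y"
  have "le x b" if x: "x \<in> lower Q le {a} \<inter> X" for x
  proof -
    have "x \<in> Q" using x unfolding lower_def by blast
    with H x have "x \<in> lower Q le (upper Q le {b} \<inter> X)"
      unfolding lower_def[of Q le "upper Q le {b} \<inter> X"] by blast
    then show "le x b" using lower_upper_dense[OF b] unfolding lower_def by simp
  qed
  with b have "b \<in> upper Q le (lower Q le {a} \<inter> X)"
    unfolding upper_def[of Q le "lower Q le {a} \<inter> X"] by blast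
  then show "le a b" using upper_lower_dense[OF a] unfolding upper_def by simp
next
  assume ab: "le a b"
  show "\<forall>x\<in>lower Q le {a} \<inter> X. \<forall>y\<in>upper Q le {b} \<inter> X. le x y"
  proof (intro ballI)
    fix x y assume "x \<in> lower Q le {a} \<inter> X" "y \<in> upper Q le {b} \<inter> X"
    then have "x \<in> Q" "le x a" "y \<in> Q" "le b y" unfolding lower_def upper_def by auto
    then show "le x y" using le_trans[OF _ a _ _ le_trans[OF a b _ ab]] by blast
  qed
qed

lemma D_set_eq_Un:
  assumes "B \<subseteq> X" "C \<subseteq> X"
  shows "{g \<in> X. g \<in> C \<or> c g \<in> B} = C \<union> c ` B"
proof (intro equalityI subsetI)
  fix g assume "g \<in> {g \<in> X. g \<in> C \<or> c g \<in> B}"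
  then show "g \<in> C \<union> c ` B"
    using X_subset c_c by (metis (mono_tags) CollectD Un_iff image_eqI subsetD)
next
  fix g assume "g \<in> C \<union> c ` B"
  then show "g \<in> {g \<in> X. g \<in> C \<or> c g \<in> B}" using assms X_subset c_in_X c_c by auto
qed

lemma poset_with_compl_X: "poset_with_compl X le c z u"
proof -
  have XQ: "x \<in> X \<Longrightarrow> x \<in> Q" for x using X_subset by blast
  have "poset_on X le"
    unfolding poset_on_def using le_refl le_antisym le_trans XQ by meson
  then show ?thesis
    unfolding poset_with_compl_def
    by (intro conjI ballI impI)
      (simp_all add: XQ z_in_X u_in_X c_in_X z_le le_u c_antitone c_c lower_X upper_X
        lower_pair_compl upper_pair_compl)
qed

lemma strongly_D_continuous_X: "strongly_D_continuous X le c z u"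
  unfolding strongly_D_continuous_def
proof (intro conjI poset_with_compl_X allI impI)
  interpret X: compl_poset X le c z u by (rule compl_poset.intro, rule poset_with_compl_X)
  fix B C assume "B \<subseteq> X \<and> C \<subseteq> X \<and> set_le le B C"
  then have B: "B \<subseteq> X" and C: "C \<subseteq> X" and BC: "set_le le B C" by auto
  then have BQ: "B \<subseteq> Q" and CQ: "C \<subseteq> Q" using X_subset by auto
  obtain b where b: "is_sup Q le B b" using ex_sup[OF BQ] by blast
  obtain d where d: "is_inf Q le C d" using ex_inf[OF CQ] by blast
  have bQ: "b \<in> Q" and dQ: "d \<in> Q"
    using b d unfolding is_sup_def is_inf_def upper_def lower_def by auto
  have bd: "le b d" using is_sup_le_is_inf[OF CQ BC b d] .
  obtain i where i: "is_inf Q le {d, c b} i" using ex_inf[of "{d, c b}"] dQ bQ c_in by blast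
  have iQ: "i \<in> Q" using i unfolding is_inf_def lower_def by simp
  have "lower Q le (c ` B) = lower Q le {c b}"
    using is_inf_lower_eq[OF poset c_image_subset[OF BQ] is_sup_c_image[OF BQ b]] .
  then have "lower X le (C \<union> c ` B) = lower Q le {d, c b} \<inter> X"
    by (simp add: lower_X lower_Un lower_pair is_inf_lower_eq[OF poset CQ d] Int_ac)
  also have "\<dots> = lower Q le {i} \<inter> X"
    using is_inf_lower_eq[OF poset _ i] dQ bQ c_in by simp
  finally have "is_inf X le {g \<in> X. g \<in> C \<or> c g \<in> B} z \<longleftrightarrow> i = z"
    using X.is_inf_z_iff lower_dense_eq_z_iff[OF iQ] D_set_eq_Un[OF B C] by simp
  also have "\<dots> \<longleftrightarrow> d = b" using meet_compl_eq_z_iff[OF bQ dQ bd i] .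
  also have "\<dots> \<longleftrightarrow> le d b" using le_antisym[OF dQ bQ] bd le_refl[OF bQ] by blast
  also have "\<dots> \<longleftrightarrow> (\<forall>a\<in>lower X le C. \<forall>b'\<in>upper X le B. le a b')"
    using dense_le_iff[OF dQ bQ]
    by (simp add: lower_X upper_X is_inf_lower_eq[OF poset CQ d] is_sup_upper_eq[OF poset BQ b])
  finally show "is_inf X le {g \<in> X. g \<in> C \<or> c g \<in> B} z \<longleftrightarrow>
      (\<forall>a\<in>lower X le C. \<forall>b'\<in>upper X le B. le a b')" .
qed

lemma pseudo_orthomodular_X: "pseudo_orthomodular X le c z u"
  unfolding pseudo_orthomodular_def
proof (intro conjI poset_with_compl_X ballI)
  fix x y assume x: "x \<in> X" and y: "y \<in> X"
  then have xQ: "x \<in> Q" and yQ: "y \<in> Q" using X_subset by auto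
  obtain m where m: "is_inf Q le {x, y} m" using ex_inf[of "{x, y}"] xQ yQ by blast
  have mQ: "m \<in> Q" and my: "le m y" using m unfolding is_inf_def lower_def by auto
  obtain s where s: "is_sup Q le {m, c y} s" using ex_sup[of "{m, c y}"] mQ yQ c_in by blast
  have sQ: "s \<in> Q" using s unfolding is_sup_def upper_def by simp
  have lower_xy: "lower X le {x, y} = lower Q le {m} \<inter> X"
    using is_inf_lower_eq[OF poset _ m] xQ yQ by (simp add: lower_X)
  have "upper X le (lower X le {x, y} \<union> {c y}) = upper Q le {m, c y} \<inter> X"
    unfolding lower_xy upper_X upper_Un by (simp add: upper_lower_dense[OF mQ] upper_pair) blast
  also have "\<dots> = upper Q le {s} \<inter> X"
    using is_sup_upper_eq[OF poset _ s] mQ yQ c_in by simp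
  finally have up: "upper X le (lower X le {x, y} \<union> {c y}) = upper Q le {s} \<inter> X" .
  have "lower X le (upper X le (lower X le {x, y} \<union> {c y}) \<union> {y}) = lower Q le {s, y} \<inter> X"
    unfolding up unfolding lower_X lower_Un by (simp add: lower_upper_dense[OF sQ] lower_pair) blast
  also have "\<dots> = lower Q le {m} \<inter> X"
    using is_inf_lower_eq[OF poset _ orthomodular_dual[OF mQ yQ my s]] sQ yQ by simp
  finally show "lower X le (upper X le (lower X le {x, y} \<union> {c y}) \<union> {y}) = lower X le {x, y}"
    by (simp add: lower_xy)
qed

end

theorem theorem10:
  shows "(\<forall>(P :: 'a set) le c z u.
            strongly_D_continuous P le c z u \<and> pseudo_orthomodular P le c z u \<longrightarrow>
            (\<exists>(Q :: 'a set set) leQ cQ zQ uQ X f.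
               complete_orthomodular_lattice Q leQ cQ zQ uQ \<and>
               compl_closed_doubly_dense Q leQ cQ zQ uQ X \<and>
               compl_poset_iso f P le c X leQ cQ))
       \<and> (\<forall>(Q :: 'b set) le c z u X.
            complete_orthomodular_lattice Q le c z u \<and>
            compl_closed_doubly_dense Q le c z u X \<longrightarrow>
            strongly_D_continuous X le c z u \<and> pseudo_orthomodular X le c z u)"
proof (intro conjI allI impI)
  fix P :: "'a set" and le c z u
  assume "strongly_D_continuous P le c z u \<and> pseudo_orthomodular P le c z u"
  then interpret strongly_D_continuous_poset P le c z u
    by unfold_locales (auto simp: strongly_D_continuous_def)
  show "\<exists>(Q :: 'a set set) leQ cQ zQ uQ X f.
          complete_orthomodular_lattice Q leQ cQ zQ uQ \<and>
          compl_closed_doubly_dense Q leQ cQ zQ uQ X \<and>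
          compl_poset_iso f P le c X leQ cQ"
    using complete_orthomodular_lattice_cuts compl_closed_doubly_dense_principal
      compl_poset_iso_principal by blast
next
  fix Q :: "'b set" and le c z u X
  assume "complete_orthomodular_lattice Q le c z u \<and> compl_closed_doubly_dense Q le c z u X"
  then interpret doubly_dense_subset Q le c z u X
    by unfold_locales auto
  show "strongly_D_continuous X le c z u" by (rule strongly_D_continuous_X)
  show "pseudo_orthomodular X le c z u" by (rule pseudo_orthomodular_X)
qed

end
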